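(* For fixed integers $2\le j\le n$ and every $d\in\{1,\dots,n-j+1\}$, $$\mathbb{P}(D_{n,j}=d)=\frac{\Gamma(d)\Gamma\!\left(j-\tfrac12\right)}{\Gamma\!\left(n-\tfrac12\right)}\left(\frac{\Gamma(n-1)\;{}_3F_2\!\left(\tfrac{2-d}{2},\tfrac{1-d}{2},2-j;\tfrac12,2-n;1\right)}{\Gamma(d)\,\Gamma(j-1)}-\frac{\Gamma\!\left(n-\tfrac32\right)\;{}_3F_2\!\left(\tfrac{3-d}{2},\tfrac{2-d}{2},\tfrac52-j;\tfrac32,\tfrac52-n;1\right)}{\Gamma(d-1)\,\Gamma\!\left(j-\tfrac32\right)}\right),$$ where $1/\Gamma(0)=0$ (so the second term vanishes for $d=1$) and each ${}_3F_2$ is the terminating finite sum obtained because one of its numerator parameters is a nonpositive integer (the sum stops before any denominator Pochhammer symbol vanishes).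
   Context: A plane-oriented recursive tree (PORT) is the random sequence of trees $(T_n)_{n\ge1}$ defined as follows. $T_1$ is a single node labeled $1$ (the root). For $n\ge2$, $T_n$ is obtained from $T_{n-1}$ by adding a node labeled $n$ and an edge joining it to a node $i\in\{1,\dots,n-1\}$ of $T_{n-1}$, where, conditionally on $T_1,\dots,T_{n-1}$, node $i$ is chosen with probability $(c_{n-1,i}+1)/(2n-3)$, with $c_{n-1,i}$ the number of children of $i$ in $T_{n-1}$. $D_{n,j}$ denotes the degree of the node labeled $j$ in $T_n$. The generalized hypergeometric function is ${}_pF_q(a_1,\dots,a_p;b_1,\dots,b_q;z)=\sum_{s\ge0}\frac{\langle a_1\rangle_s\cdots\langle a_p\rangle_s}{\langle b_1\rangle_s\cdots\langle b_q\rangle_s}\frac{z^s}{s!}$, where $\langle x\rangle_s=x(x+1)\cdots(x+s-1)$, $\langle x\rangle_0=1$. *)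

theory Defs
  imports "HOL-Probability.Probability"
begin

text \<open>A plane-oriented recursive tree T_n is encoded by the list xs of length n-1
  where xs ! (k-2) is the parent of node k (k = 2..n). Nodes are labeled 1..n.\<close>

text \<open>Attachment step: node i of T_n (nodes 1..n) is chosen with probability
  (c_{n,i}+1)/(2n-1), i.e. uniformly from the multiset in which node i occurs
  c_{n,i}+1 times (once as a node, once per child).\<close>
fun port :: "nat \<Rightarrow> nat list pmf" where
  "port 0 = return_pmf []"
| "port (Suc 0) = return_pmf []"
| "port (Suc (Suc m)) =
     bind_pmf (port (Suc m)) (\<lambda>xs.
       map_pmf (\<lambda>i. xs @ [i]) (pmf_of_multiset (mset [1..<m+2] + mset xs)))"

definition deg :: "nat list \<Rightarrow> nat \<Rightarrow> nat" where
  "deg xs j = count (mset xs) j + (if 2 \<le> j \<and> j \<le> length xs + 1 then 1 else 0)"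

text \<open>Terminating generalized hypergeometric 3F2: the sum stops at the first index
  at which a nonpositive integer numerator parameter makes the Pochhammer symbol vanish.\<close>
definition hyp3F2 :: "real \<Rightarrow> real \<Rightarrow> real \<Rightarrow> real \<Rightarrow> real \<Rightarrow> real \<Rightarrow> real" where
  "hyp3F2 a1 a2 a3 b1 b2 z =
     (let N = Min {nat \<lfloor>-a\<rfloor> | a. a \<in> {a1, a2, a3} \<and> a \<in> \<int> \<and> a \<le> 0} in
      \<Sum>s\<le>N. pochhammer a1 s * pochhammer a2 s * pochhammer a3 s
              / (pochhammer b1 s * pochhammer b2 s) * z ^ s / fact s)"

end

theory Submission
  imports Defs
begin

text \<open>
  When node n + 1 arrives, node j gains a child with probability D / (2n - 1), where D is its
  current degree (its weight c + 1 in the attachment rule). So the degree of node j is a Markov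
  chain D(n+1) = D(n) + Bernoulli(D(n) / (2n - 1)) started at D(j) = 1, and one checks that its
  law is P(D(n) = d) = \<Sum>k<d. (-1)^k C(d-1, k) \<Prod>m=j-1..n-2. (1 - (k+1)/(2m+1)).
  Each product is a quotient of Pochhammer symbols. Splitting the alternating sum by the parity
  of k and writing C(d-1, 2s) and C(d-1, 2s+1) as Pochhammer quotients turns the two halves into
  the two terminating 3F2 series; Gamma quotients then produce the stated prefactors.
\<close>

section \<open>The degree of a node as a Markov chain\<close>

lemma map_pmf_of_multiset_eq_bernoulli:
  assumes "M \<noteq> {#}"
  shows "map_pmf (\<lambda>y. y = x) (pmf_of_multiset M) = bernoulli_pmf (count M x / size M)"
proof -
  have p: "0 \<le> count M x / size M" "count M x / size M \<le> 1"
    using assms by (auto simp: divide_le_eq_1 count_le_size nonempty_has_size)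
  have "pmf (map_pmf (\<lambda>y. y = x) (pmf_of_multiset M)) b = pmf (bernoulli_pmf (count M x / size M)) b"
    for b
  proof -
    have "pmf (map_pmf (\<lambda>y. y = x) (pmf_of_multiset M)) True = count M x / size M"
      using assms by (simp add: pmf_map vimage_def measure_pmf_single)
    moreover have "pmf (map_pmf (\<lambda>y. y = x) (pmf_of_multiset M)) False = 1 - count M x / size M"
      using assms measure_pmf.prob_compl[of "{x}" "pmf_of_multiset M"]
      by (simp add: pmf_map vimage_def measure_pmf_single set_diff_eq)
    ultimately show ?thesis using p by (cases b) simp_all
  qed
  then show ?thesis by (rule pmf_eqI)
qed

lemma pmf_bind_bernoulli_increment:
  assumes "\<And>\<delta>. \<delta> \<in> set_pmf D \<Longrightarrow> 0 \<le> p \<delta> \<and> p \<delta> \<le> 1"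
  shows "pmf (bind_pmf D (\<lambda>\<delta>. map_pmf (\<lambda>b. \<delta> + of_bool b) (bernoulli_pmf (p \<delta>)))) (Suc e)
           = (1 - p (Suc e)) * pmf D (Suc e) + p e * pmf D e"
proof -
  define H where "H \<delta> = (if \<delta> = Suc e then 1 - p \<delta> else 0) + (if \<delta> = e then p \<delta> else 0)"
    for \<delta>
  have bool_sets: "{b. b} = {True}" "{b. \<not> b} = {False}"
    by auto
  have "pmf (map_pmf (\<lambda>b. \<delta> + of_bool b) (bernoulli_pmf (p \<delta>))) (Suc e) = H \<delta>"
    if "\<delta> \<in> set_pmf D" for \<delta>
    using assms[OF that] by (cases "\<delta> = e")
      (auto simp: H_def pmf_map vimage_def measure_pmf_single bool_sets)
  then have "pmf (bind_pmf D (\<lambda>\<delta>. map_pmf (\<lambda>b. \<delta> + of_bool b) (bernoulli_pmf (p \<delta>)))) (Suc e)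
      = (\<integral>\<delta>. H \<delta> \<partial>D)"
    unfolding pmf_bind by (intro integral_cong_AE) (simp_all add: AE_measure_pmf_iff)
  also have "\<dots> = (\<Sum>\<delta>\<in>{Suc e, e}. H \<delta> * pmf D \<delta>)"
    by (rule integral_measure_pmf_real) (auto simp: H_def split: if_splits)
  finally show ?thesis by (simp add: H_def)
qed

lemma set_pmf_portD:
  "xs \<in> set_pmf (port (Suc m)) \<Longrightarrow> length xs = m \<and> set xs \<subseteq> {1..m}"
proof (induction m arbitrary: xs)
  case 0
  then show ?case by simp
next
  case (Suc m)
  have "mset [1..<m+2] + mset ys \<noteq> {#}" for ys :: "nat list"
    by simp
  with Suc.prems obtain ys i where ys: "ys \<in> set_pmf (port (Suc m))"
    and i: "i \<in># mset [1..<m+2] + mset ys" and xs: "xs = ys @ [i]"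
    by (auto simp del: upt_Suc)
  with Suc.IH[OF ys] show ?case by auto
qed

lemma deg_snoc:
  assumes "length xs = m" "2 \<le> j" "j \<le> Suc m"
  shows "deg (xs @ [i]) j = deg xs j + of_bool (i = j)"
  using assms by (simp add: deg_def)

lemma count_port_attachment:
  assumes "length xs = m" "2 \<le> j" "j \<le> Suc m"
  shows "count (mset [1..<m+2] + mset xs) j = deg xs j"
  using assms by (simp add: deg_def)

definition degree_pmf :: "nat \<Rightarrow> nat \<Rightarrow> nat pmf" where
  "degree_pmf j n = map_pmf (\<lambda>xs. deg xs j) (port n)"

lemma set_pmf_degree_pmf:
  assumes "2 \<le> j" "j \<le> Suc m"
  shows "set_pmf (degree_pmf j (Suc m)) \<subseteq> {1..Suc m}"
proof
  fix \<delta> assume "\<delta> \<in> set_pmf (degree_pmf j (Suc m))"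
  then obtain xs where xs: "xs \<in> set_pmf (port (Suc m))" and \<delta>: "\<delta> = deg xs j"
    by (auto simp: degree_pmf_def)
  have "count (mset xs) j \<le> m"
    using set_pmf_portD[OF xs] count_le_size[of "mset xs" j] by simp
  then show "\<delta> \<in> {1..Suc m}"
    using set_pmf_portD[OF xs] assms by (simp add: \<delta> deg_def)
qed

lemma degree_pmf_birth:
  assumes "2 \<le> j"
  shows "degree_pmf j j = return_pmf 1"
proof -
  have "deg xs j = 1" if "xs \<in> set_pmf (port j)" for xs
    using set_pmf_portD[of xs "j - 1"] that assms by (auto simp: deg_def count_eq_zero_iff)
  then have "degree_pmf j j = map_pmf (\<lambda>_. 1) (port j)"
    unfolding degree_pmf_def by (intro map_pmf_cong) auto
  then show ?thesis by simp
qed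

lemma degree_pmf_Suc:
  assumes "2 \<le> j" "j \<le> Suc m"
  shows "degree_pmf j (Suc (Suc m)) = bind_pmf (degree_pmf j (Suc m))
           (\<lambda>\<delta>. map_pmf (\<lambda>b. \<delta> + of_bool b) (bernoulli_pmf (real \<delta> / (2 * real m + 1))))"
proof -
  define M where "M xs = mset [1..<m+2] + mset xs" for xs
  have step: "map_pmf (\<lambda>i. deg (xs @ [i]) j) (pmf_of_multiset (M xs)) =
      map_pmf (\<lambda>b. deg xs j + of_bool b) (bernoulli_pmf (deg xs j / (2 * real m + 1)))"
    if "xs \<in> set_pmf (port (Suc m))" for xs
  proof -
    have len: "length xs = m" using set_pmf_portD[OF that] by simp
    have "map_pmf (\<lambda>i. i = j) (pmf_of_multiset (M xs)) =
        bernoulli_pmf (count (M xs) j / size (M xs))"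
      by (rule map_pmf_of_multiset_eq_bernoulli) (simp add: M_def)
    also have "count (M xs) j / size (M xs) = deg xs j / (2 * real m + 1)"
      using count_port_attachment[OF len assms] len by (simp add: M_def)
    finally have "map_pmf (\<lambda>i. i = j) (pmf_of_multiset (M xs)) =
        bernoulli_pmf (deg xs j / (2 * real m + 1))" .
    moreover have "map_pmf (\<lambda>i. deg (xs @ [i]) j) (pmf_of_multiset (M xs)) =
        map_pmf (\<lambda>b. deg xs j + of_bool b) (map_pmf (\<lambda>i. i = j) (pmf_of_multiset (M xs)))"
      using deg_snoc[OF len assms] by (simp add: pmf.map_comp o_def)
    ultimately show ?thesis by simp
  qed
  have "degree_pmf j (Suc (Suc m)) =
      bind_pmf (port (Suc m)) (\<lambda>xs. map_pmf (\<lambda>i. deg (xs @ [i]) j) (pmf_of_multiset (M xs)))"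
    by (simp add: degree_pmf_def M_def map_bind_pmf pmf.map_comp o_def del: upt_Suc)
  also have "\<dots> = bind_pmf (port (Suc m)) (\<lambda>xs.
      map_pmf (\<lambda>b. deg xs j + of_bool b) (bernoulli_pmf (deg xs j / (2 * real m + 1))))"
    using step by (intro bind_pmf_cong) simp_all
  finally show ?thesis
    unfolding degree_pmf_def[of j "Suc m"] bind_map_pmf .
qed

lemma pmf_degree_pmf_Suc:
  assumes "2 \<le> j" "j \<le> Suc m"
  shows "pmf (degree_pmf j (Suc (Suc m))) (Suc e) =
           (1 - real (Suc e) / (2 * real m + 1)) * pmf (degree_pmf j (Suc m)) (Suc e)
           + real e / (2 * real m + 1) * pmf (degree_pmf j (Suc m)) e"
  unfolding degree_pmf_Suc[OF assms]
  by (rule pmf_bind_bernoulli_increment) (use set_pmf_degree_pmf[OF assms] in auto)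

section \<open>Solving the degree recurrence\<close>

text \<open>\<open>degree_weight j k n\<close> is \<Prod>m=j-1..n-2. (1 - (k+1)/(2m+1)).\<close>

definition degree_weight :: "nat \<Rightarrow> nat \<Rightarrow> nat \<Rightarrow> real" where
  "degree_weight j k n =
     pochhammer (real j - (real k + 2) / 2) (n - j) / pochhammer (real j - 1/2) (n - j)"

definition degree_closed_form :: "nat \<Rightarrow> nat \<Rightarrow> nat \<Rightarrow> real" where
  "degree_closed_form j n d = (\<Sum>k<d. (-1)^k * real (d - 1 choose k) * degree_weight j k n)"

lemma degree_weight_Suc:
  assumes "2 \<le> j" "j \<le> Suc m"
  shows "degree_weight j k (Suc (Suc m)) =
           degree_weight j k (Suc m) * (1 - (real k + 1) / (2 * real m + 1))"
proof -
  have len: "Suc (Suc m) - j = Suc (Suc m - j)" and last: "real (Suc m - j) = real m + 1 - real j"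
    using assms by (simp_all add: of_nat_diff)
  define A where "A = pochhammer (real j - (real k + 2) / 2) (Suc m - j)"
  define B where "B = pochhammer (real j - 1/2) (Suc m - j)"
  have "degree_weight j k (Suc (Suc m)) = (A * (real m + 1 - (real k + 2) / 2)) / (B * (real m + 1/2))"
    unfolding degree_weight_def len pochhammer_Suc last A_def B_def by (simp add: algebra_simps)
  also have "\<dots> = (A / B) * ((real m + 1 - (real k + 2) / 2) / (real m + 1/2))"
    by simp
  also have "(real m + 1 - (real k + 2) / 2) / (real m + 1/2) = 1 - (real k + 1) / (2 * real m + 1)"
    by (simp add: field_simps)
  finally show ?thesis
    unfolding degree_weight_def A_def B_def .
qed

lemma degree_closed_form_Suc:
  assumes "2 \<le> j" "j \<le> Suc m"
  shows "degree_closed_form j (Suc (Suc m)) (Suc e) =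
           (1 - real (Suc e) / (2 * real m + 1)) * degree_closed_form j (Suc m) (Suc e)
           + real e / (2 * real m + 1) * degree_closed_form j (Suc m) e"
proof -
  define c where "c = 2 * real m + 1"
  define a where "a k = (-1)^k * real (e choose k) * degree_weight j k (Suc m)" for k
  have "c > 0" by (simp add: c_def)
  have "degree_closed_form j (Suc (Suc m)) (Suc e) = (\<Sum>k\<le>e. a k * (1 - (real k + 1) / c))"
    unfolding degree_closed_form_def a_def c_def lessThan_Suc_atMost
    using degree_weight_Suc[OF assms] by (simp add: ac_simps)
  also have "\<dots> = (1 - real (Suc e) / c) * (\<Sum>k\<le>e. a k) + (\<Sum>k\<le>e. (real e - real k) * a k) / c"
    using \<open>c > 0\<close> by (simp add: sum_distrib_left sum_divide_distrib field_simps flip: sum.distrib)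
  also have "(\<Sum>k\<le>e. (real e - real k) * a k) = (\<Sum>k<e. (real e - real k) * a k)"
    by (simp add: lessThan_Suc_atMost[symmetric])
  also have "\<dots> = real e * degree_closed_form j (Suc m) e"
    unfolding degree_closed_form_def sum_distrib_left
  proof (intro sum.cong refl)
    fix k assume "k \<in> {..<e}"
    then have "(real e - real k) * real (e choose k) = real e * real (e - 1 choose k)"
      using binomial_absorb_comp[of e k] by (simp flip: of_nat_diff of_nat_mult)
    then show "(real e - real k) * a k = real e * ((-1)^k * real (e - 1 choose k) * degree_weight j k (Suc m))"
      unfolding a_def by (metis (no_types, lifting) mult.assoc mult.left_commute)
  qed
  also have "(\<Sum>k\<le>e. a k) = degree_closed_form j (Suc m) (Suc e)"
    by (simp add: degree_closed_form_def a_def lessThan_Suc_atMost)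
  finally show ?thesis by (simp add: c_def)
qed

lemma pmf_degree_pmf_eq_closed_form:
  assumes "2 \<le> j" "j \<le> n"
  shows "pmf (degree_pmf j n) d = degree_closed_form j n d"
  using assms(2)
proof (induction n arbitrary: d rule: dec_induct)
  case base
  have "degree_closed_form j j (Suc e) = of_bool (e = 0)" for e
    using choose_alternating_sum[of e]
    by (auto simp: degree_closed_form_def degree_weight_def lessThan_Suc_atMost)
  then show ?case
    by (cases d) (simp_all add: degree_pmf_birth[OF assms(1)] degree_closed_form_def)
next
  case (step n)
  then obtain m where m: "n = Suc m" using assms by (cases n) auto
  show ?case
  proof (cases d)
    case 0
    then show ?thesis using set_pmf_degree_pmf[of j "Suc m"] step.hyps assms m
      by (auto simp: degree_closed_form_def set_pmf_iff)
  next
    case (Suc e)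
    then show ?thesis
      using pmf_degree_pmf_Suc[of j m e] degree_closed_form_Suc[of j m e] step assms m by simp
  qed
qed

section \<open>Terminating hypergeometric series\<close>

definition hyp3F2_term :: "real \<Rightarrow> real \<Rightarrow> real \<Rightarrow> real \<Rightarrow> real \<Rightarrow> real \<Rightarrow> nat \<Rightarrow> real" where
  "hyp3F2_term a1 a2 a3 b1 b2 z s =
     pochhammer a1 s * pochhammer a2 s * pochhammer a3 s
       / (pochhammer b1 s * pochhammer b2 s) * z ^ s / fact s"

lemma hyp3F2_eq_sum:
  assumes "a \<in> {a1, a2, a3}" "a = - of_nat m" "m \<le> M"
  shows "hyp3F2 a1 a2 a3 b1 b2 z = (\<Sum>s\<le>M. hyp3F2_term a1 a2 a3 b1 b2 z s)"
proof -
  define S where "S = {nat \<lfloor>-a\<rfloor> | a. a \<in> {a1, a2, a3} \<and> a \<in> \<int> \<and> a \<le> 0}"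
  have "finite S"
    by (rule finite_subset[of _ "(\<lambda>a. nat \<lfloor>-a\<rfloor>) ` {a1, a2, a3}"]) (auto simp: S_def)
  moreover have "m \<in> S"
    unfolding S_def using assms(1,2) by (intro CollectI exI[of _ a]) auto
  ultimately have "Min S \<in> S" "Min S \<le> m"
    by (auto intro: Min_in)
  then obtain a' where a': "a' \<in> {a1, a2, a3}" "a' = - of_nat (Min S)"
    unfolding S_def by (auto elim!: Ints_cases)
  have "hyp3F2_term a1 a2 a3 b1 b2 z s = 0" if "Min S < s" for s
  proof -
    have "pochhammer a' s = 0"
      unfolding pochhammer_eq_0_iff using that a'(2) by blast
    then show ?thesis using a'(1) unfolding hyp3F2_term_def by auto
  qed
  then have "(\<Sum>s\<le>Min S. hyp3F2_term a1 a2 a3 b1 b2 z s) = (\<Sum>s\<le>M. hyp3F2_term a1 a2 a3 b1 b2 z s)"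
    using \<open>Min S \<le> m\<close> assms(3) by (intro sum.mono_neutral_left) auto
  then show ?thesis
    unfolding hyp3F2_def hyp3F2_term_def S_def Let_def by simp
qed

lemma fact_double_Suc:
  "fact (2 * n + 1) = (2 ^ (2 * n) * pochhammer (3 / 2) n * fact n :: 'a::field_char_0)"
  using pochhammer_double[of "1::'a" n] pochhammer_rec[of "1::'a" "2 * n"]
  by (simp add: pochhammer_fact)

lemma binomial_even_eq_pochhammer:
  "real (e choose (2 * s)) =
     pochhammer ((1 - real e) / 2) s * pochhammer (- real e / 2) s / (pochhammer (1/2) s * fact s)"
proof -
  have eq: "2 * (- real e / 2) = - real e" "- real e / 2 + 1/2 = (1 - real e) / 2"
    by simp_all
  have "real (e choose (2 * s)) = pochhammer (- real e) (2 * s) / fact (2 * s)"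
    by (simp add: binomial_gbinomial gbinomial_pochhammer)
  also have "\<dots> = 2 ^ (2 * s) * pochhammer (- real e / 2) s * pochhammer ((1 - real e) / 2) s
      / (2 ^ (2 * s) * pochhammer (1/2) s * fact s)"
    using pochhammer_double[of "- real e / 2" s] unfolding eq fact_double by simp
  finally show ?thesis by simp
qed

lemma binomial_odd_eq_pochhammer:
  "real (e choose (2 * s + 1)) =
     real e * pochhammer ((2 - real e) / 2) s * pochhammer ((1 - real e) / 2) s
       / (pochhammer (3/2) s * fact s)"
proof -
  have "pochhammer (- real e) (2 * s + 1) = - real e * pochhammer (1 - real e) (2 * s)"
    using pochhammer_rec[of "- real e" "2 * s"] by simp
  also have "pochhammer (1 - real e) (2 * s) =
      2 ^ (2 * s) * pochhammer ((1 - real e) / 2) s * pochhammer ((2 - real e) / 2) s"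
  proof -
    have eq: "2 * ((1 - real e) / 2) = 1 - real e" "(1 - real e) / 2 + 1/2 = (2 - real e) / 2"
      by simp_all
    show ?thesis
      using pochhammer_double[of "(1 - real e) / 2" s] unfolding eq by simp
  qed
  finally have p: "pochhammer (- real e) (2 * s + 1) =
      - real e * (2 ^ (2 * s) * pochhammer ((1 - real e) / 2) s * pochhammer ((2 - real e) / 2) s)" .
  have "real (e choose (2 * s + 1)) = - pochhammer (- real e) (2 * s + 1) / fact (2 * s + 1)"
    by (simp add: binomial_gbinomial gbinomial_pochhammer)
  also have "\<dots> = real e * 2 ^ (2 * s) * pochhammer ((1 - real e) / 2) s * pochhammer ((2 - real e) / 2) s
      / (2 ^ (2 * s) * pochhammer (3/2) s * fact s)"
    unfolding p fact_double_Suc by simp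
  finally show ?thesis by simp
qed

lemma pochhammer_reflect_ratio:
  fixes a :: real
  assumes "0 < a" "s \<le> N"
  shows "pochhammer (1 - a) s / pochhammer (1 - (a + real N)) s * pochhammer a N =
           pochhammer (a - real s) N"
proof -
  have "pochhammer (1 - a) s = (-1)^s * pochhammer (a - real s) s"
    using pochhammer_minus[of "a - 1" s] by (simp add: algebra_simps)
  moreover have "pochhammer (1 - (a + real N)) s = (-1)^s * pochhammer (a + real N - real s) s"
    using pochhammer_minus[of "a + real N - 1" s] by (simp add: algebra_simps)
  moreover have "pochhammer (a - real s) s * pochhammer a N =
      pochhammer (a - real s) N * pochhammer (a + real N - real s) s"
    using pochhammer_product'[of "a - real s" s N] pochhammer_product'[of "a - real s" N s]
    by (simp add: add.commute algebra_simps)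
  moreover have "pochhammer (a + real N - real s) s > 0"
    using assms by (intro pochhammer_pos) simp
  ultimately show ?thesis by simp
qed

lemma pochhammer_mult_hyp3F2_reflect:
  fixes a :: real
  assumes "0 < a" "c \<in> {\<alpha>, \<beta>}" "c = - of_nat m" "m \<le> M" "M \<le> N"
  shows "pochhammer a N * hyp3F2 \<alpha> \<beta> (1 - a) \<gamma> (1 - (a + real N)) 1 =
           (\<Sum>s\<le>M. pochhammer \<alpha> s * pochhammer \<beta> s / (pochhammer \<gamma> s * fact s)
                     * pochhammer (a - real s) N)"
proof -
  have "hyp3F2 \<alpha> \<beta> (1 - a) \<gamma> (1 - (a + real N)) 1 =
      (\<Sum>s\<le>M. hyp3F2_term \<alpha> \<beta> (1 - a) \<gamma> (1 - (a + real N)) 1 s)"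
    using assms(2-4) by (intro hyp3F2_eq_sum[of c]) auto
  also have "pochhammer a N * \<dots> = (\<Sum>s\<le>M. pochhammer \<alpha> s * pochhammer \<beta> s
      / (pochhammer \<gamma> s * fact s) * pochhammer (a - real s) N)"
    unfolding sum_distrib_left
  proof (intro sum.cong refl)
    fix s assume "s \<in> {..M}"
    then have "s \<le> N" using assms(5) by simp
    have "pochhammer a N * hyp3F2_term \<alpha> \<beta> (1 - a) \<gamma> (1 - (a + real N)) 1 s =
        pochhammer \<alpha> s * pochhammer \<beta> s / (pochhammer \<gamma> s * fact s)
        * (pochhammer (1 - a) s / pochhammer (1 - (a + real N)) s * pochhammer a N)"
      by (simp add: hyp3F2_term_def ac_simps)
    then show "pochhammer a N * hyp3F2_term \<alpha> \<beta> (1 - a) \<gamma> (1 - (a + real N)) 1 s =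
        pochhammer \<alpha> s * pochhammer \<beta> s / (pochhammer \<gamma> s * fact s) * pochhammer (a - real s) N"
      unfolding pochhammer_reflect_ratio[OF assms(1) \<open>s \<le> N\<close>] .
  qed
  finally show ?thesis .
qed

lemma hyp3F2_even_binomial_sum:
  fixes a :: real
  assumes "0 < a" "e \<le> N"
  shows "pochhammer a N * hyp3F2 ((1 - real e) / 2) (- real e / 2) (1 - a) (1/2) (1 - (a + real N)) 1
           = (\<Sum>s\<le>e. real (e choose (2 * s)) * pochhammer (a - real s) N)"
proof -
  have c: "(if even e then - real e / 2 else (1 - real e) / 2) = - of_nat (e div 2)"
    by (auto elim!: evenE oddE simp: field_simps)
  show ?thesis
    unfolding binomial_even_eq_pochhammer
    by (rule pochhammer_mult_hyp3F2_reflect[OF assms(1) _ c _ assms(2)]) auto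
qed

lemma hyp3F2_odd_binomial_sum:
  fixes a :: real
  assumes "0 < a" "e \<le> N"
  shows "pochhammer a N * real e * hyp3F2 ((2 - real e) / 2) ((1 - real e) / 2) (1 - a) (3/2)
             (1 - (a + real N)) 1
           = (\<Sum>s\<le>e. real (e choose (2 * s + 1)) * pochhammer (a - real s) N)"
proof (cases e)
  case 0
  (* The series need not terminate here, so hyp3F2 may be a junk value; the factor real e = 0
     discards it. *)
  then show ?thesis by simp
next
  case (Suc f)
  have c: "(if even f then - real f / 2 else (1 - real f) / 2) = - of_nat (f div 2)"
    by (auto elim!: evenE oddE simp: field_simps)
  have "pochhammer a N * hyp3F2 ((2 - real e) / 2) ((1 - real e) / 2) (1 - a) (3/2)
      (1 - (a + real N)) 1 = (\<Sum>s\<le>e. pochhammer ((2 - real e) / 2) s * pochhammer ((1 - real e) / 2) s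
        / (pochhammer (3/2) s * fact s) * pochhammer (a - real s) N)"
    by (rule pochhammer_mult_hyp3F2_reflect[OF assms(1) _ c _ assms(2)]) (auto simp: Suc)
  then show ?thesis
    unfolding binomial_odd_eq_pochhammer by (simp add: sum_distrib_left ac_simps)
qed

lemma sum_alternating_binomial_split:
  fixes g :: "nat \<Rightarrow> real"
  shows "(\<Sum>k\<le>e. (-1)^k * real (e choose k) * g k) =
           (\<Sum>s\<le>e. real (e choose (2 * s)) * g (2 * s))
           - (\<Sum>s\<le>e. real (e choose (2 * s + 1)) * g (2 * s + 1))"
proof -
  have "(\<Sum>k\<le>e. (-1)^k * real (e choose k) * g k) = (\<Sum>k<2 * Suc e. (-1)^k * real (e choose k) * g k)"
    by (intro sum.mono_neutral_left) auto
  also have "\<dots> = (\<Sum>k<2 * Suc e. if even k then real (e choose k) * g k else - (real (e choose k) * g k))"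
    by (intro sum.cong) auto
  finally show ?thesis
    unfolding sum_split_even_odd lessThan_Suc_atMost by (simp add: sum_negf)
qed

lemma degree_closed_form_eq_hyp3F2:
  assumes "2 \<le> j" "j \<le> n" "1 \<le> d" "d \<le> n - j + 1"
  shows "pochhammer (real j - 1/2) (n - j) * degree_closed_form j n d =
           pochhammer (real j - 1) (n - j)
             * hyp3F2 ((2 - real d)/2) ((1 - real d)/2) (2 - real j) (1/2) (2 - real n) 1
           - pochhammer (real j - 3/2) (n - j) * (real d - 1)
             * hyp3F2 ((3 - real d)/2) ((2 - real d)/2) (5/2 - real j) (3/2) (5/2 - real n) 1"
proof -
  obtain e where d: "d = Suc e" and e: "e \<le> n - j"
    using assms(3,4) by (cases d) auto
  define N where "N = n - j"
  have "real n = real j + real N"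
    using assms(2) by (simp add: N_def)
  then have params: "(2 - real d)/2 = (1 - real e)/2" "(1 - real d)/2 = - real e / 2"
      "(3 - real d)/2 = (2 - real e)/2" "real d - 1 = real e"
      "2 - real j = 1 - (real j - 1)" "2 - real n = 1 - (real j - 1 + real N)"
      "5/2 - real j = 1 - (real j - 3/2)" "5/2 - real n = 1 - (real j - 3/2 + real N)"
    using d by simp_all
  have shifts: "real j - (real (2 * s) + 2) / 2 = real j - 1 - real s"
      "real j - (real (2 * s + 1) + 2) / 2 = real j - 3/2 - real s" for s
    by (simp_all add: field_simps)
  have "pochhammer (real j - 1/2) N > 0"
    using assms(1) by (intro pochhammer_pos) simp
  then have "pochhammer (real j - 1/2) N * degree_closed_form j n d =
      (\<Sum>k\<le>e. (-1)^k * real (e choose k) * pochhammer (real j - (real k + 2) / 2) N)"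
    by (simp add: degree_closed_form_def degree_weight_def d N_def lessThan_Suc_atMost
        sum_distrib_left)
  also have "\<dots> = (\<Sum>s\<le>e. real (e choose (2 * s)) * pochhammer (real j - 1 - real s) N)
      - (\<Sum>s\<le>e. real (e choose (2 * s + 1)) * pochhammer (real j - 3/2 - real s) N)"
    by (simp only: sum_alternating_binomial_split shifts)
  also have "\<dots> = pochhammer (real j - 1) N
        * hyp3F2 ((1 - real e)/2) (- real e / 2) (1 - (real j - 1)) (1/2) (1 - (real j - 1 + real N)) 1
      - pochhammer (real j - 3/2) N * real e
        * hyp3F2 ((2 - real e)/2) ((1 - real e)/2) (1 - (real j - 3/2)) (3/2)
            (1 - (real j - 3/2 + real N)) 1"
    using hyp3F2_even_binomial_sum[of "real j - 1" e N] hyp3F2_odd_binomial_sum[of "real j - 3/2" e N]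
      assms(1) e by (simp add: N_def)
  finally show ?thesis
    unfolding params N_def .
qed

section \<open>Gamma quotients\<close>

lemma Gamma_add_mult_rGamma:
  fixes x :: real
  assumes "0 < x"
  shows "Gamma (x + real m) * rGamma x = pochhammer x m"
proof -
  have "x \<notin> \<int>\<^sub>\<le>\<^sub>0"
    using assms by (auto elim!: nonpos_Ints_cases)
  then show ?thesis
    by (simp add: pochhammer_Gamma rGamma_inverse_Gamma divide_inverse)
qed

lemma Gamma_div_Gamma_add:
  fixes x :: real
  assumes "0 < x"
  shows "Gamma x / Gamma (x + real m) = 1 / pochhammer x m"
  using Gamma_add_mult_rGamma[OF assms, of m] Gamma_real_pos[OF assms]
  by (simp add: rGamma_inverse_Gamma field_simps)

lemma Gamma_mult_rGamma_pos:
  fixes x :: real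
  assumes "0 < x"
  shows "Gamma x * rGamma x = 1"
  using Gamma_real_pos[OF assms] by (simp add: rGamma_inverse_Gamma)

lemma Gamma_mult_rGamma_minus_1:
  fixes x :: real
  assumes "0 < x"
  shows "Gamma x * rGamma (x - 1) = x - 1"
  using rGamma_plus1[of "x - 1"] Gamma_mult_rGamma_pos[OF assms]
  by (metis diff_add_cancel mult.left_commute mult.right_neutral)

lemma Gamma_coefficients_eq_pochhammer:
  fixes F1 F2 :: real
  assumes "2 \<le> j" "j \<le> n" "1 \<le> d"
  shows "Gamma (real d) * Gamma (real j - 1/2) / Gamma (real n - 1/2) *
           (Gamma (real n - 1) * F1 * rGamma (real d) * rGamma (real j - 1)
            - Gamma (real n - 3/2) * F2 * rGamma (real d - 1) * rGamma (real j - 3/2))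
         = (pochhammer (real j - 1) (n - j) * F1 - pochhammer (real j - 3/2) (n - j) * (real d - 1) * F2)
           / pochhammer (real j - 1/2) (n - j)"
proof -
  define N where "N = n - j"
  have n: "real n = real j + real N"
    using assms(2) by (simp add: N_def)
  have G1: "Gamma (real n - 1) * rGamma (real j - 1) = pochhammer (real j - 1) N"
    and G2: "Gamma (real n - 3/2) * rGamma (real j - 3/2) = pochhammer (real j - 3/2) N"
    and G3: "Gamma (real j - 1/2) / Gamma (real n - 1/2) = 1 / pochhammer (real j - 1/2) N"
    using Gamma_add_mult_rGamma[of "real j - 1" N] Gamma_add_mult_rGamma[of "real j - 3/2" N]
      Gamma_div_Gamma_add[of "real j - 1/2" N] assms(1) n by (simp_all add: algebra_simps)
  have "Gamma (real d) * Gamma (real j - 1/2) / Gamma (real n - 1/2) *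
      (Gamma (real n - 1) * F1 * rGamma (real d) * rGamma (real j - 1)
       - Gamma (real n - 3/2) * F2 * rGamma (real d - 1) * rGamma (real j - 3/2))
    = Gamma (real j - 1/2) / Gamma (real n - 1/2) *
      ((Gamma (real d) * rGamma (real d)) * (Gamma (real n - 1) * rGamma (real j - 1)) * F1
       - (Gamma (real d) * rGamma (real d - 1)) * (Gamma (real n - 3/2) * rGamma (real j - 3/2)) * F2)"
    by (simp add: algebra_simps)
  also have "\<dots> = (pochhammer (real j - 1) N * F1 - pochhammer (real j - 3/2) N * (real d - 1) * F2)
      / pochhammer (real j - 1/2) N"
    using assms(3) by (simp add: G1 G2 G3 Gamma_mult_rGamma_pos Gamma_mult_rGamma_minus_1)
  finally show ?thesis
    unfolding N_def .
qed

theorem corollary3p1: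
  fixes n j d :: nat
  assumes "2 \<le> j" and "j \<le> n" and "1 \<le> d" and "d \<le> n - j + 1"
  shows "measure_pmf.prob (port n) {xs. deg xs j = d} =
    Gamma (real d) * Gamma (real j - 1/2) / Gamma (real n - 1/2) *
      (Gamma (real n - 1) *
         hyp3F2 ((2 - real d)/2) ((1 - real d)/2) (2 - real j) (1/2) (2 - real n) 1
         * rGamma (real d) * rGamma (real j - 1)
       - Gamma (real n - 3/2) *
         hyp3F2 ((3 - real d)/2) ((2 - real d)/2) (5/2 - real j) (3/2) (5/2 - real n) 1
         * rGamma (real d - 1) * rGamma (real j - 3/2))"
proof -
  have pos: "pochhammer (real j - 1/2) (n - j) > 0"
    using assms(1) by (intro pochhammer_pos) simp
  have "measure_pmf.prob (port n) {xs. deg xs j = d} = degree_closed_form j n d"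
    using pmf_degree_pmf_eq_closed_form[OF assms(1,2)] by (simp add: degree_pmf_def pmf_map vimage_def)
  also have "\<dots> = (pochhammer (real j - 1/2) (n - j) * degree_closed_form j n d)
      / pochhammer (real j - 1/2) (n - j)"
    using pos by simp
  finally show ?thesis
    unfolding degree_closed_form_eq_hyp3F2[OF assms] Gamma_coefficients_eq_pochhammer[OF assms(1-3)]
    by (simp add: mult.assoc)
qed

end
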